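(* Let $\mathcal K\subseteq\mathbb R^d$ be closed and convex, $\alpha,\epsilon,L>0$, and let $\ell_1,\dots,\ell_T:\mathcal K\to\mathbb R$ be $(\alpha,\epsilon)$-nearly strongly convex with subgradients bounded in norm by $L$, revealed online together with scales $g_1,\dots,g_T\in[0,1]$ (each possibly chosen adaptively). Run online gradient descent: pick any $x_1\in\mathcal K$, and set $x_{t+1}=\Pi_{\mathcal K}\big(x_t-\eta_tg_t\nabla\ell_t(x_t)\big)$ with $\eta_t=R'(G_t)$, $G_t=\sum_{s\le t}g_s$, where $R'(z)=\frac2\alpha$ for $z\in[0,1]$, $R'(z)=\frac{2}{\alpha z}$ for $z\in\big[1,(\frac{\sqrt2L}{\alpha\epsilon})^2\big]$, and $R'(z)=\frac{\sqrt2\,\epsilon}{L\sqrt z}$ for $z\ge(\frac{\sqrt2L}{\alpha\epsilon})^2$. Then for every $x^*\in\mathcal K$, $$\sum_{t=1}^Tg_t\big(\ell_t(x_t)-\ell_t(x^* )\big)\le2\sqrt2\,\epsilon L\sqrt{G_T}+\frac{L^2}{\alpha}\big(\log(G_T+1)+1\big).$$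
   Context: A continuous function $h$ on a convex set $\mathcal K$ is $(\alpha,\epsilon)$-nearly strongly convex if for all $x,y\in\mathcal K$ and every subgradient $\nabla h(x)$, $h(y)-h(x)-\nabla h(x)^\top(y-x)\ge\frac\alpha2\big(\|y-x\|-\epsilon\big)_+^2$, where $(z)_+=\max(z,0)$. $\Pi_{\mathcal K}$ is Euclidean projection onto $\mathcal K$; $\nabla\ell_t(x_t)$ is any subgradient. *)

theory Defs
  imports "HOL-Analysis.Analysis"
begin

definition subgradient_at :: "'a::euclidean_space set \<Rightarrow> ('a \<Rightarrow> real) \<Rightarrow> 'a \<Rightarrow> 'a \<Rightarrow> bool" where
  "subgradient_at K h x v \<longleftrightarrow> (\<forall>y\<in>K. h y \<ge> h x + v \<bullet> (y - x))"

definition nearly_strongly_convex :: "real \<Rightarrow> real \<Rightarrow> 'a::euclidean_space set \<Rightarrow> ('a \<Rightarrow> real) \<Rightarrow> bool" where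
  "nearly_strongly_convex \<alpha> \<epsilon> K h \<longleftrightarrow> continuous_on K h \<and>
     (\<forall>x\<in>K. \<forall>y\<in>K. \<forall>v. subgradient_at K h x v \<longrightarrow>
        h y - h x - v \<bullet> (y - x) \<ge> \<alpha> / 2 * (max (norm (y - x) - \<epsilon>) 0)\<^sup>2)"

definition Rprime :: "real \<Rightarrow> real \<Rightarrow> real \<Rightarrow> real \<Rightarrow> real" where
  "Rprime \<alpha> \<epsilon> L z =
     (if z \<le> 1 then 2 / \<alpha>
      else if z \<le> (sqrt 2 * L / (\<alpha> * \<epsilon>))\<^sup>2 then 2 / (\<alpha> * z)
      else sqrt 2 * \<epsilon> / (L * sqrt z))"

end

theory Submission
  imports Defs
begin

text \<open>The weighted regret is paid for by the potential
  \<open>Phi n = F (G n) - psi (G n) * norm (x (n + 1) - x*)^2\<close>, where \<open>psi = ogd_weight\<close> is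
  \<open>alpha / 4 * min z (a * sqrt z)\<close> with \<open>a = sqrt 2 * L / (alpha * eps)\<close>, and \<open>F = ogd_potential\<close> is
  \<open>2 * eps^2 * psi z + 3 / sqrt 2 * eps * L * sqrt z + L^2 / alpha * log_ramp z\<close>.
  Expanding the projected step and applying near strong convexity bounds the regret of a round
  plus the change of the distance term by a quadratic in \<open>r = norm (x t - x*)\<close> minus the hinge
  term \<open>alpha * g t / 2 * (r - eps)_+^2\<close>; its maximum over \<open>r\<close> is paid for by the increase of \<open>F\<close>.
  The step size makes \<open>theta = 2 * R'(G t) * psi (G t)\<close> equal to \<open>1\<close> once \<open>G t > 1\<close>, so that the
  linear term in \<open>r\<close> cancels and only the second-order term of the step remains.
  Telescoping from \<open>Phi 0 = 0\<close> leaves \<open>F (G T)\<close>, which is at most the claimed bound.\<close>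

definition capped_sqrt :: "real \<Rightarrow> real \<Rightarrow> real" where
  "capped_sqrt a z = min z (a * sqrt z)"

lemma capped_sqrt_square:
  assumes "0 \<le> p"
  shows "capped_sqrt a (p\<^sup>2) = (if p \<le> a then p\<^sup>2 else a * p)"
proof (cases "p \<le> a")
  case True
  then have "p * p \<le> a * p" using assms by (intro mult_right_mono)
  then show ?thesis using True assms by (simp add: capped_sqrt_def power2_eq_square)
next
  case False
  then have "a * p \<le> p * p" using assms by (intro mult_right_mono) auto
  then show ?thesis using False assms by (simp add: capped_sqrt_def power2_eq_square)
qed

lemma capped_sqrt_eq:
  assumes "0 \<le> z"
  shows "capped_sqrt a z = (if sqrt z \<le> a then z else a * sqrt z)"
  using capped_sqrt_square[of "sqrt z" a] assms by simp

lemma capped_sqrt_nonneg: "0 \<le> a \<Longrightarrow> 0 \<le> z \<Longrightarrow> 0 \<le> capped_sqrt a z"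
  by (simp add: capped_sqrt_def)

lemma capped_sqrt_le: "capped_sqrt a z \<le> z"
  by (simp add: capped_sqrt_def)

lemma capped_sqrt_le_sqrt: "capped_sqrt a z \<le> a * sqrt z"
  by (simp add: capped_sqrt_def)

lemma capped_sqrt_mono:
  assumes "0 \<le> a" "u \<le> v"
  shows "capped_sqrt a u \<le> capped_sqrt a v"
  unfolding capped_sqrt_def using assms by (intro min.mono mult_left_mono) auto

lemma capped_sqrt_diff_le:
  assumes "0 \<le> u" "u \<le> v"
  shows "capped_sqrt a v - capped_sqrt a u \<le> v - u"
proof -
  define p s where "p = sqrt u" and "s = sqrt v"
  have ps: "0 \<le> p" "p \<le> s" and uv: "u = p\<^sup>2" "v = s\<^sup>2"
    using assms by (auto simp: p_def s_def)
  note square_cases = capped_sqrt_square[OF ps(1)] capped_sqrt_square[of s, OF order_trans[OF ps]]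
  consider "s \<le> a" | "p \<le> a" "a < s" | "a < p" by linarith
  then have "capped_sqrt a (s\<^sup>2) - capped_sqrt a (p\<^sup>2) \<le> s\<^sup>2 - p\<^sup>2"
  proof cases
    case 2
    then have "a * s \<le> s * s" using ps by (intro mult_right_mono) auto
    then show ?thesis using 2 ps unfolding square_cases by (simp add: power2_eq_square)
  next
    case 3
    then have "a * (s - p) \<le> (s + p) * (s - p)" using ps by (intro mult_right_mono) auto
    then show ?thesis using 3 ps unfolding square_cases by (simp add: algebra_simps power2_eq_square)
  qed (use ps in \<open>simp add: square_cases\<close>)
  then show ?thesis using uv by simp
qed

lemma quadratic_increment_bound:
  fixes p s :: real
  assumes "0 \<le> p" "p \<le> s" "s \<le> 1"
  shows "(1 - s\<^sup>2) * ((s\<^sup>2 - p\<^sup>2) + s\<^sup>2 - p\<^sup>2) \<le> 2 * (s - p)"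
proof -
  have "s * (1 - s) \<le> 1 / 4"
    using zero_le_power2[of "s - 1 / 2"] by (simp add: algebra_simps power2_eq_square)
  have "(1 - s\<^sup>2) * (s + p) \<le> (1 - s\<^sup>2) * (2 * s)"
    using assms by (intro mult_left_mono) (auto simp: power_le_one)
  also have "\<dots> = 2 * (s * (1 - s)) * (1 + s)" by (simp add: algebra_simps power2_eq_square)
  also have "\<dots> \<le> 2 * (1 / 4) * 2"
    using \<open>s * (1 - s) \<le> 1 / 4\<close> assms by (intro mult_mono) auto
  finally have "(1 - s\<^sup>2) * (s + p) * (2 * (s - p)) \<le> 1 * (2 * (s - p))"
    using assms by (intro mult_right_mono) auto
  then show ?thesis by (simp add: algebra_simps power2_eq_square)
qed

lemma linear_increment_bound:
  fixes a p s :: real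
  assumes "0 < a" "a \<le> p" "p \<le> s" "s \<le> 1"
  shows "(1 - a * s) * ((s\<^sup>2 - p\<^sup>2) + a * s - a * p) \<le> 2 * (s - p)"
proof -
  have "a * s \<le> 1" using assms by (intro mult_le_one) auto
  then have "(1 - a * s) * (s + p + a) \<le> (1 - a * s) * (2 * s + a)"
    using assms by (intro mult_left_mono) auto
  also have "\<dots> = 2 - ((1 - s) * (2 - a * (1 + s)) + a * s\<^sup>2 + a\<^sup>2 * s)"
    by (simp add: algebra_simps power2_eq_square)
  also have "\<dots> \<le> 2"
  proof -
    have "a * (1 + s) \<le> 1 * 2" using assms by (intro mult_mono) auto
    then have "0 \<le> (1 - s) * (2 - a * (1 + s))" "0 \<le> a * s\<^sup>2 + a\<^sup>2 * s" using assms by simp_all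
    then show ?thesis by linarith
  qed
  finally have "(1 - a * s) * (s + p + a) * (s - p) \<le> 2 * (s - p)"
    using assms by (intro mult_right_mono) auto
  then show ?thesis by (simp add: algebra_simps power2_eq_square)
qed

lemma crossing_increment_bound:
  fixes a p s :: real
  assumes "0 \<le> p" "p \<le> a" "a \<le> s" "s \<le> 1"
  shows "(1 - a * s) * ((s\<^sup>2 - p\<^sup>2) + a * s - p\<^sup>2) \<le> 2 * (s - p)"
proof -
  have "p * (a - p) \<le> p * (s - p)" "(s - p) * (s + 2 * p + a) \<le> (s - p) * (s + 3 * a)"
    using assms by (auto intro: mult_left_mono)
  moreover have "(s\<^sup>2 - p\<^sup>2) + a * s - p\<^sup>2 = (s - p) * (s + p + a) + p * (a - p)"
    by (simp add: algebra_simps power2_eq_square)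
  ultimately have "(s\<^sup>2 - p\<^sup>2) + a * s - p\<^sup>2 \<le> (s - p) * (s + 3 * a)"
    by (simp add: algebra_simps)
  moreover have "a * s \<le> 1" using assms by (intro mult_le_one) auto
  ultimately have "(1 - a * s) * ((s\<^sup>2 - p\<^sup>2) + a * s - p\<^sup>2) \<le> (1 - a * s) * ((s - p) * (s + 3 * a))"
    by (intro mult_left_mono) auto
  also have "\<dots> = (s - p) * ((1 - a * s) * (s + 3 * a))" by simp
  also have "\<dots> \<le> (s - p) * 2"
  proof (rule mult_left_mono)
    have "a\<^sup>2 \<le> s\<^sup>2" using assms by (intro power_mono) auto
    then have "0 \<le> (1 - s) + (a + 1) * (2 * a - 1)\<^sup>2 + a * (s\<^sup>2 - a\<^sup>2) + 3 * a\<^sup>2 * (s - a)"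
      using assms by simp
    also have "\<dots> = 2 - (1 - a * s) * (s + 3 * a)"
      by (simp add: algebra_simps power2_eq_square power3_eq_cube)
    finally show "(1 - a * s) * (s + 3 * a) \<le> 2" by simp
  qed (use assms in auto)
  finally show ?thesis by simp
qed

lemma capped_sqrt_increment_bound:
  assumes "0 < a" "0 \<le> u" "u \<le> v" "v \<le> 1"
  shows "(1 - capped_sqrt a v) * ((v - u) + capped_sqrt a v - capped_sqrt a u)
           \<le> 2 * (sqrt v - sqrt u)"
proof -
  define p s where "p = sqrt u" and "s = sqrt v"
  have ps: "0 \<le> p" "p \<le> s" "s \<le> 1" and uv: "u = p\<^sup>2" "v = s\<^sup>2"
    using assms by (auto simp: p_def s_def)
  note square_cases = capped_sqrt_square[OF ps(1)] capped_sqrt_square[of s, OF order_trans[OF ps(1,2)]]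
  consider "s \<le> a" | "a < p" | "p \<le> a" "a < s" by linarith
  then have "(1 - capped_sqrt a (s\<^sup>2)) * ((s\<^sup>2 - p\<^sup>2) + capped_sqrt a (s\<^sup>2) - capped_sqrt a (p\<^sup>2))
      \<le> 2 * (s - p)"
  proof cases
    case 1
    then show ?thesis using quadratic_increment_bound[OF ps] ps unfolding square_cases by simp
  next
    case 2
    then show ?thesis using linear_increment_bound[OF assms(1) _ ps(2,3)] ps
      unfolding square_cases by auto
  next
    case 3
    then show ?thesis using crossing_increment_bound[OF ps(1) _ _ ps(3)] ps
      unfolding square_cases by auto
  qed
  from this[unfolded uv[symmetric]] show ?thesis by (simp add: p_def s_def)
qed

definition log_ramp :: "real \<Rightarrow> real" where
  "log_ramp z = (if z \<le> 1 then z else 1 + ln z)"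

lemma log_ramp_mono: "u \<le> v \<Longrightarrow> log_ramp u \<le> log_ramp v"
  unfolding log_ramp_def by (smt (verit) ln_ge_zero ln_le_cancel_iff)

lemma log_ramp_increment_ge:
  assumes "0 \<le> u" "u \<le> v" "v - u \<le> 1" "1 < v"
  shows "(v - u)\<^sup>2 / v \<le> log_ramp v - log_ramp u"
proof -
  have "(v - u)\<^sup>2 \<le> v - u"
    using mult_left_le_one_le[of "v - u" "v - u"] assms by (simp add: power2_eq_square)
  then have gap: "(v - u)\<^sup>2 / v \<le> (v - u) / v"
    using assms by (intro divide_right_mono) auto
  show ?thesis
  proof (cases "u \<le> 1")
    case True
    have "1 - 1 / v \<le> ln v"
      using ln_le_minus_one[of "1 / v"] assms by (simp add: ln_div)
    moreover have "(v - u) / v = 1 - u + (1 - 1 / v) - (1 - u) * (v - 1) / v"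
      using assms by (simp add: field_simps)
    moreover have "0 \<le> (1 - u) * (v - 1) / v" using True assms by simp
    moreover have "log_ramp v - log_ramp u = 1 + ln v - u" using True assms by (simp add: log_ramp_def)
    ultimately show ?thesis using gap by linarith
  next
    case False
    have "1 - u / v \<le> ln v - ln u"
      using ln_le_minus_one[of "u / v"] assms False by (simp add: ln_div)
    then show ?thesis using gap False assms by (simp add: log_ramp_def diff_divide_distrib)
  qed
qed

lemma log_ramp_le: "0 \<le> z \<Longrightarrow> log_ramp z \<le> ln (z + 1) + 1"
  unfolding log_ramp_def by (smt (verit) ln_ge_zero ln_le_cancel_iff)

lemma linear_minus_hinge_sq_le:
  fixes m r \<epsilon> :: real
  assumes "0 \<le> m"
  shows "m * r - (max (r - \<epsilon>) 0)\<^sup>2 / 2 \<le> m * \<epsilon> + m\<^sup>2 / 2"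
proof (cases "r \<le> \<epsilon>")
  case True
  then have "m * r \<le> m * \<epsilon>" using assms by (intro mult_left_mono)
  then show ?thesis using True by (simp add: add_increasing2)
next
  case False
  have "m * r - (r - \<epsilon>)\<^sup>2 / 2 = m * \<epsilon> + m\<^sup>2 / 2 - (r - \<epsilon> - m)\<^sup>2 / 2"
    by (simp add: power2_eq_square field_simps)
  then show ?thesis using False by simp
qed

lemma quadratic_minus_hinge_sq_le:
  fixes m r \<epsilon> :: real
  assumes "0 \<le> m" "0 \<le> r" "0 \<le> \<epsilon>"
  shows "r\<^sup>2 / 4 + m * r - (max (r - \<epsilon>) 0)\<^sup>2 / 2 \<le> \<epsilon>\<^sup>2 / 2 + 2 * (\<epsilon> * m) + m\<^sup>2"
proof (cases "r \<le> \<epsilon>")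
  case True
  then have "m * r \<le> \<epsilon> * m" "r\<^sup>2 \<le> \<epsilon>\<^sup>2"
    using assms by (auto simp: mult.commute[of m] intro: mult_right_mono power_mono)
  moreover have "0 \<le> \<epsilon> * m" using assms by simp
  moreover have "(max (r - \<epsilon>) 0)\<^sup>2 = 0" using True by simp
  ultimately show ?thesis using zero_le_power2[of m] zero_le_power2[of \<epsilon>] by linarith
next
  case False
  have "r\<^sup>2 / 4 + m * r - (r - \<epsilon>)\<^sup>2 / 2
      = \<epsilon>\<^sup>2 / 2 + 2 * (\<epsilon> * m) + m\<^sup>2 - (\<epsilon> / 2 - (r - \<epsilon>) / 2 + m)\<^sup>2"
    by (simp add: power2_eq_square field_simps)
  then show ?thesis using False by simp
qed

lemma hinge_quadratic_bound:
  fixes d \<gamma> m r \<epsilon> :: real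
  assumes "0 \<le> m" "0 \<le> r" "0 \<le> \<epsilon>" "0 \<le> d" "d \<le> \<gamma>"
  shows "d * r\<^sup>2 / 4 + m * \<gamma> * r - \<gamma> * (max (r - \<epsilon>) 0)\<^sup>2 / 2
           \<le> \<epsilon>\<^sup>2 * d / 2 + m * \<epsilon> * (\<gamma> + d) + m\<^sup>2 * (\<gamma> + d) / 2"
proof -
  define M where "M = (max (r - \<epsilon>) 0)\<^sup>2"
  have "(\<gamma> - d) * (m * r - M / 2) \<le> (\<gamma> - d) * (m * \<epsilon> + m\<^sup>2 / 2)"
    using linear_minus_hinge_sq_le[OF assms(1)] assms by (intro mult_left_mono) (auto simp: M_def)
  moreover have "d * (r\<^sup>2 / 4 + m * r - M / 2) \<le> d * (\<epsilon>\<^sup>2 / 2 + 2 * (\<epsilon> * m) + m\<^sup>2)"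
    using quadratic_minus_hinge_sq_le[OF assms(1-3)] assms by (intro mult_left_mono) (auto simp: M_def)
  ultimately have "(\<gamma> - d) * (m * r - M / 2) + d * (r\<^sup>2 / 4 + m * r - M / 2)
      \<le> (\<gamma> - d) * (m * \<epsilon> + m\<^sup>2 / 2) + d * (\<epsilon>\<^sup>2 / 2 + 2 * (\<epsilon> * m) + m\<^sup>2)"
    by (rule add_mono)
  then show ?thesis unfolding M_def[symmetric] by (simp add: field_simps)
qed

definition ogd_weight :: "real \<Rightarrow> real \<Rightarrow> real \<Rightarrow> real \<Rightarrow> real" where
  "ogd_weight \<alpha> \<epsilon> L z = \<alpha> / 4 * capped_sqrt (sqrt 2 * L / (\<alpha> * \<epsilon>)) z"

definition ogd_potential :: "real \<Rightarrow> real \<Rightarrow> real \<Rightarrow> real \<Rightarrow> real" where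
  "ogd_potential \<alpha> \<epsilon> L z = 2 * \<epsilon>\<^sup>2 * ogd_weight \<alpha> \<epsilon> L z + 3 * sqrt 2 / 2 * \<epsilon> * L * sqrt z
     + L\<^sup>2 / \<alpha> * log_ramp z"

lemma Rprime_weight_unit_interval:
  assumes "0 < \<alpha>" "z \<le> 1"
  shows "2 * Rprime \<alpha> \<epsilon> L z * ogd_weight \<alpha> \<epsilon> L z = capped_sqrt (sqrt 2 * L / (\<alpha> * \<epsilon>)) z"
  using assms by (simp add: Rprime_def ogd_weight_def)

lemma Rprime_weight_eq_one:
  assumes "0 < \<alpha>" "0 < \<epsilon>" "0 < L" "1 < z"
  shows "2 * Rprime \<alpha> \<epsilon> L z * ogd_weight \<alpha> \<epsilon> L z = 1"
proof -
  define a where "a = sqrt 2 * L / (\<alpha> * \<epsilon>)"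
  have "0 < a" using assms by (simp add: a_def)
  show ?thesis
  proof (cases "z \<le> a\<^sup>2")
    case True
    then have "sqrt z \<le> a" using \<open>0 < a\<close> by (intro real_le_lsqrt) auto
    then show ?thesis using True assms
      by (simp add: Rprime_def ogd_weight_def capped_sqrt_eq a_def[symmetric])
  next
    case False
    then have "a < sqrt z" by (intro real_less_rsqrt) simp
    then have "2 * Rprime \<alpha> \<epsilon> L z * ogd_weight \<alpha> \<epsilon> L z
        = 2 * (sqrt 2 * \<epsilon> / (L * sqrt z)) * (\<alpha> / 4 * (sqrt 2 * L / (\<alpha> * \<epsilon>) * sqrt z))"
      using False assms by (simp add: Rprime_def ogd_weight_def capped_sqrt_eq a_def[symmetric])
    also have "\<dots> = 1" using assms by (simp add: field_simps)
    finally show ?thesis .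
  qed
qed

lemma Rprime_increment_sq_le:
  assumes "0 < \<alpha>" "0 < \<epsilon>" "0 < L" "0 \<le> u" "u \<le> v" "v - u \<le> 1" "1 < v"
  shows "Rprime \<alpha> \<epsilon> L v * (v - u)\<^sup>2 * L\<^sup>2 / 2
           \<le> 3 * sqrt 2 / 2 * \<epsilon> * L * (sqrt v - sqrt u) + L\<^sup>2 / \<alpha> * (log_ramp v - log_ramp u)"
proof -
  have sqrt_gap: "0 \<le> sqrt v - sqrt u" using assms by simp
  then have sqrt_term: "0 \<le> 3 * sqrt 2 / 2 * \<epsilon> * L * (sqrt v - sqrt u)" using assms by simp
  have ramp_gap: "0 \<le> L\<^sup>2 / \<alpha> * (log_ramp v - log_ramp u)"
    using assms log_ramp_mono[of u v] by simp
  show ?thesis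
  proof (cases "v \<le> (sqrt 2 * L / (\<alpha> * \<epsilon>))\<^sup>2")
    case True
    have "Rprime \<alpha> \<epsilon> L v * (v - u)\<^sup>2 * L\<^sup>2 / 2 = L\<^sup>2 / \<alpha> * ((v - u)\<^sup>2 / v)"
      using True assms by (simp add: Rprime_def)
    also have "\<dots> \<le> L\<^sup>2 / \<alpha> * (log_ramp v - log_ramp u)"
      using log_ramp_increment_ge[of u v] assms by (intro mult_left_mono) auto
    finally show ?thesis using sqrt_term by linarith
  next
    case False
    have "(v - u)\<^sup>2 \<le> v - u"
      using mult_left_le_one_le[of "v - u" "v - u"] assms by (simp add: power2_eq_square)
    also have "\<dots> = (sqrt v - sqrt u) * (sqrt v + sqrt u)"
      using assms by (simp add: algebra_simps)
    also have "\<dots> \<le> (sqrt v - sqrt u) * (2 * sqrt v)"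
      using sqrt_gap assms by (intro mult_left_mono) auto
    finally have gap_bound: "(v - u)\<^sup>2 / (2 * sqrt v) \<le> sqrt v - sqrt u"
      using assms by (simp add: divide_le_eq mult.commute)
    have Rv: "Rprime \<alpha> \<epsilon> L v = sqrt 2 * \<epsilon> / (L * sqrt v)"
      using False assms by (simp add: Rprime_def)
    have "Rprime \<alpha> \<epsilon> L v * (v - u)\<^sup>2 * L\<^sup>2 / 2
        = sqrt 2 * \<epsilon> * L * ((v - u)\<^sup>2 / (2 * sqrt v))"
      unfolding Rv using assms by (simp add: field_simps power2_eq_square)
    also have "\<dots> \<le> sqrt 2 * \<epsilon> * L * (sqrt v - sqrt u)"
      using gap_bound assms by (intro mult_left_mono) auto
    also have "\<dots> \<le> 3 * sqrt 2 / 2 * \<epsilon> * L * (sqrt v - sqrt u)"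
      using sqrt_gap assms by (intro mult_right_mono) auto
    finally show ?thesis using ramp_gap by linarith
  qed
qed

lemma ogd_weight_nonneg:
  assumes "0 < \<alpha>" "0 < \<epsilon>" "0 < L" "0 \<le> z"
  shows "0 \<le> ogd_weight \<alpha> \<epsilon> L z"
  using assms by (simp add: ogd_weight_def capped_sqrt_nonneg)

lemma Rprime_weight_bounds:
  assumes "0 < \<alpha>" "0 < \<epsilon>" "0 < L" "0 \<le> z"
  shows "0 \<le> 2 * Rprime \<alpha> \<epsilon> L z * ogd_weight \<alpha> \<epsilon> L z"
    and "2 * Rprime \<alpha> \<epsilon> L z * ogd_weight \<alpha> \<epsilon> L z \<le> 1"
proof (atomize (full), cases "z \<le> 1")
  case True
  then show "0 \<le> 2 * Rprime \<alpha> \<epsilon> L z * ogd_weight \<alpha> \<epsilon> L z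
      \<and> 2 * Rprime \<alpha> \<epsilon> L z * ogd_weight \<alpha> \<epsilon> L z \<le> 1"
    using assms capped_sqrt_le[of "sqrt 2 * L / (\<alpha> * \<epsilon>)" z]
    by (simp add: Rprime_weight_unit_interval capped_sqrt_nonneg)
qed (use assms Rprime_weight_eq_one in auto)

lemma second_order_residual_le:
  fixes c d \<gamma> :: real
  assumes "0 \<le> c" "c \<le> 1" "0 \<le> d" "d \<le> \<gamma>" "\<gamma> \<le> 1"
  shows "(1 - c)\<^sup>2 * (\<gamma> + d) / 2 + c * \<gamma>\<^sup>2 \<le> \<gamma>"
proof -
  have "(1 - c)\<^sup>2 * (\<gamma> + d) \<le> (1 - c)\<^sup>2 * (2 * \<gamma>)"
    using assms by (intro mult_left_mono) auto
  then have "(1 - c)\<^sup>2 * (\<gamma> + d) / 2 \<le> (1 - c)\<^sup>2 * \<gamma>" by simp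
  also have "\<dots> \<le> (1 - c) * \<gamma>"
    using mult_left_le_one_le[of "1 - c" "1 - c"] assms
    by (intro mult_right_mono) (auto simp: power2_eq_square)
  finally show ?thesis
    using mult_left_le_one_le[of \<gamma> \<gamma>] mult_left_mono[of "\<gamma>\<^sup>2" \<gamma> c] assms
    by (simp add: power2_eq_square algebra_simps)
qed

lemma ogd_residual_terms_le:
  fixes \<alpha> \<epsilon> L u v :: real
  assumes pos: "0 < \<alpha>" "0 < \<epsilon>" "0 < L" and uv: "0 \<le> u" "u \<le> v" "v - u \<le> 1"
  defines "d \<equiv> capped_sqrt (sqrt 2 * L / (\<alpha> * \<epsilon>)) v - capped_sqrt (sqrt 2 * L / (\<alpha> * \<epsilon>)) u"
    and "\<theta> \<equiv> 2 * Rprime \<alpha> \<epsilon> L v * ogd_weight \<alpha> \<epsilon> L v"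
  shows "(1 - \<theta>) * L * \<epsilon> * (v - u + d) + (1 - \<theta>)\<^sup>2 * L\<^sup>2 * (v - u + d) / (2 * \<alpha>)
           + \<theta> * Rprime \<alpha> \<epsilon> L v * (v - u)\<^sup>2 * L\<^sup>2 / 2
         \<le> 3 * sqrt 2 / 2 * \<epsilon> * L * (sqrt v - sqrt u) + L\<^sup>2 / \<alpha> * (log_ramp v - log_ramp u)"
proof (cases "v \<le> 1")
  case True
  define a where "a = sqrt 2 * L / (\<alpha> * \<epsilon>)"
  define c where "c = capped_sqrt a v"
  define \<gamma> where "\<gamma> = v - u"
  have a0: "0 < a" using pos by (simp add: a_def)
  have \<theta>: "\<theta> = c" using pos True by (simp add: \<theta>_def Rprime_weight_unit_interval a_def c_def)
  have c: "0 \<le> c" "c \<le> 1" using capped_sqrt_le[of a v] capped_sqrt_nonneg[of a v] a0 uv True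
    by (auto simp: c_def)
  have d: "0 \<le> d" "d \<le> \<gamma>"
    using capped_sqrt_mono[of a u v] capped_sqrt_diff_le[of u v a] a0 uv
    by (auto simp: d_def \<gamma>_def a_def)
  have \<gamma>: "0 \<le> \<gamma>" "\<gamma> \<le> 1" using uv by (auto simp: \<gamma>_def)
  have "(1 - c) * (\<gamma> + d) \<le> 2 * (sqrt v - sqrt u)"
    using capped_sqrt_increment_bound[OF a0 uv(1,2) True]
    by (simp add: c_def d_def \<gamma>_def a_def add_diff_eq)
  also have "\<dots> \<le> 3 * sqrt 2 / 2 * (sqrt v - sqrt u)"
  proof -
    have "4 / 3 \<le> sqrt 2" by (rule real_le_rsqrt) (simp add: power2_eq_square)
    then show ?thesis using uv by (intro mult_right_mono) auto
  qed
  finally have first: "(1 - c) * L * \<epsilon> * (\<gamma> + d) \<le> 3 * sqrt 2 / 2 * \<epsilon> * L * (sqrt v - sqrt u)"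
    using mult_right_mono[of _ _ "L * \<epsilon>"] pos by (simp add: mult_ac)
  have "(1 - c)\<^sup>2 * (\<gamma> + d) / 2 + c * \<gamma>\<^sup>2 \<le> \<gamma>"
    using second_order_residual_le[OF c d(1)] d(2) \<gamma> by simp
  then have "L\<^sup>2 / \<alpha> * ((1 - c)\<^sup>2 * (\<gamma> + d) / 2 + c * \<gamma>\<^sup>2) \<le> L\<^sup>2 / \<alpha> * \<gamma>"
    using pos by (intro mult_left_mono) auto
  moreover have "(1 - c)\<^sup>2 * L\<^sup>2 * (\<gamma> + d) / (2 * \<alpha>) + c * Rprime \<alpha> \<epsilon> L v * \<gamma>\<^sup>2 * L\<^sup>2 / 2
      = L\<^sup>2 / \<alpha> * ((1 - c)\<^sup>2 * (\<gamma> + d) / 2 + c * \<gamma>\<^sup>2)"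
    using True pos by (simp add: Rprime_def field_simps)
  moreover have "L\<^sup>2 / \<alpha> * (log_ramp v - log_ramp u) = L\<^sup>2 / \<alpha> * \<gamma>"
    using True uv by (simp add: log_ramp_def \<gamma>_def)
  ultimately show ?thesis using first unfolding \<theta> \<gamma>_def by linarith
next
  case False
  then have "\<theta> = 1" using pos by (simp add: \<theta>_def Rprime_weight_eq_one)
  then show ?thesis using Rprime_increment_sq_le[OF pos uv] False by simp
qed

lemma ogd_potential_increment:
  fixes \<alpha> \<epsilon> L u v r :: real
  assumes pos: "0 < \<alpha>" "0 < \<epsilon>" "0 < L" and uv: "0 \<le> u" "u \<le> v" "v - u \<le> 1"
    and r: "0 \<le> r"
  defines "\<theta> \<equiv> 2 * Rprime \<alpha> \<epsilon> L v * ogd_weight \<alpha> \<epsilon> L v"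
  shows "(ogd_weight \<alpha> \<epsilon> L v - ogd_weight \<alpha> \<epsilon> L u) * r\<^sup>2 + (1 - \<theta>) * (v - u) * L * r
           - \<alpha> * (v - u) / 2 * (max (r - \<epsilon>) 0)\<^sup>2 + \<theta> * Rprime \<alpha> \<epsilon> L v * (v - u)\<^sup>2 * L\<^sup>2 / 2
         \<le> ogd_potential \<alpha> \<epsilon> L v - ogd_potential \<alpha> \<epsilon> L u"
proof -
  define a where "a = sqrt 2 * L / (\<alpha> * \<epsilon>)"
  define d where "d = capped_sqrt a v - capped_sqrt a u"
  define m where "m = (1 - \<theta>) * L / \<alpha>"
  define M where "M = (max (r - \<epsilon>) 0)\<^sup>2"
  have weight_diff: "ogd_weight \<alpha> \<epsilon> L v - ogd_weight \<alpha> \<epsilon> L u = \<alpha> / 4 * d"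
    by (simp add: ogd_weight_def d_def a_def right_diff_distrib)
  have "\<theta> \<le> 1" using Rprime_weight_bounds(2)[OF pos] uv by (simp add: \<theta>_def)
  then have m: "0 \<le> m" using pos by (simp add: m_def)
  have d: "0 \<le> d" "d \<le> v - u"
    using capped_sqrt_mono[of a u v] capped_sqrt_diff_le[of u v a] pos uv by (auto simp: d_def a_def)
  have "\<alpha> * (d * r\<^sup>2 / 4 + m * (v - u) * r - (v - u) * M / 2)
      \<le> \<alpha> * (\<epsilon>\<^sup>2 * d / 2 + m * \<epsilon> * (v - u + d) + m\<^sup>2 * (v - u + d) / 2)"
    using hinge_quadratic_bound[OF m r _ d] pos unfolding M_def by (intro mult_left_mono) auto
  moreover have "\<alpha> * (d * r\<^sup>2 / 4 + m * (v - u) * r - (v - u) * M / 2)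
      = (ogd_weight \<alpha> \<epsilon> L v - ogd_weight \<alpha> \<epsilon> L u) * r\<^sup>2 + (1 - \<theta>) * (v - u) * L * r
        - \<alpha> * (v - u) / 2 * M"
    using pos by (simp add: weight_diff m_def field_simps)
  moreover have "\<alpha> * (\<epsilon>\<^sup>2 * d / 2 + m * \<epsilon> * (v - u + d) + m\<^sup>2 * (v - u + d) / 2)
      = 2 * \<epsilon>\<^sup>2 * (ogd_weight \<alpha> \<epsilon> L v - ogd_weight \<alpha> \<epsilon> L u) + (1 - \<theta>) * L * \<epsilon> * (v - u + d)
        + (1 - \<theta>)\<^sup>2 * L\<^sup>2 * (v - u + d) / (2 * \<alpha>)"
    using pos by (simp add: weight_diff m_def field_simps power2_eq_square)
  moreover have "ogd_potential \<alpha> \<epsilon> L v - ogd_potential \<alpha> \<epsilon> L u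
      = 2 * \<epsilon>\<^sup>2 * (ogd_weight \<alpha> \<epsilon> L v - ogd_weight \<alpha> \<epsilon> L u)
        + 3 * sqrt 2 / 2 * \<epsilon> * L * (sqrt v - sqrt u) + L\<^sup>2 / \<alpha> * (log_ramp v - log_ramp u)"
    by (simp add: ogd_potential_def algebra_simps diff_divide_distrib)
  ultimately show ?thesis
    using ogd_residual_terms_le[OF pos uv] unfolding \<theta>_def[symmetric] d_def[unfolded a_def, symmetric] M_def
    by linarith
qed

lemma ogd_weight_zero: "ogd_weight \<alpha> \<epsilon> L 0 = 0"
  by (simp add: ogd_weight_def capped_sqrt_def)

lemma ogd_potential_zero: "ogd_potential \<alpha> \<epsilon> L 0 = 0"
  by (simp add: ogd_potential_def ogd_weight_zero log_ramp_def)

lemma ogd_potential_le: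
  assumes "0 < \<alpha>" "0 < \<epsilon>" "0 < L" "0 \<le> z"
  shows "ogd_potential \<alpha> \<epsilon> L z \<le> 2 * sqrt 2 * \<epsilon> * L * sqrt z + L\<^sup>2 / \<alpha> * (ln (z + 1) + 1)"
proof -
  have "2 * \<epsilon>\<^sup>2 * ogd_weight \<alpha> \<epsilon> L z \<le> 2 * \<epsilon>\<^sup>2 * (\<alpha> / 4 * (sqrt 2 * L / (\<alpha> * \<epsilon>) * sqrt z))"
    unfolding ogd_weight_def using assms by (intro mult_left_mono capped_sqrt_le_sqrt) auto
  also have "\<dots> = sqrt 2 / 2 * \<epsilon> * L * sqrt z"
    using assms by (simp add: field_simps power2_eq_square)
  finally have "2 * \<epsilon>\<^sup>2 * ogd_weight \<alpha> \<epsilon> L z \<le> sqrt 2 / 2 * \<epsilon> * L * sqrt z" .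
  moreover have "L\<^sup>2 / \<alpha> * log_ramp z \<le> L\<^sup>2 / \<alpha> * (ln (z + 1) + 1)"
    using log_ramp_le assms by (intro mult_left_mono) auto
  moreover have "sqrt 2 / 2 * \<epsilon> * L * sqrt z + 3 * sqrt 2 / 2 * \<epsilon> * L * sqrt z
      = 2 * sqrt 2 * \<epsilon> * L * sqrt z"
    by (simp add: field_simps)
  ultimately show ?thesis unfolding ogd_potential_def by linarith
qed

lemma nearly_strongly_convex_gap:
  assumes "nearly_strongly_convex \<alpha> \<epsilon> K h" "x \<in> K" "y \<in> K" "subgradient_at K h x v"
  shows "h x - h y \<le> v \<bullet> (x - y) - \<alpha> / 2 * (max (norm (x - y) - \<epsilon>) 0)\<^sup>2"
proof -
  have "h y - h x - v \<bullet> (y - x) \<ge> \<alpha> / 2 * (max (norm (y - x) - \<epsilon>) 0)\<^sup>2"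
    using assms unfolding nearly_strongly_convex_def by blast
  then show ?thesis by (simp add: norm_minus_commute inner_diff_right)
qed

lemma closest_point_step_dist_sq_le:
  fixes K :: "'a::euclidean_space set"
  assumes "closed K" "convex K" "z \<in> K"
  shows "(norm (closest_point K (y - c *\<^sub>R v) - z))\<^sup>2
           \<le> (norm (y - z))\<^sup>2 - 2 * c * (v \<bullet> (y - z)) + c\<^sup>2 * (norm v)\<^sup>2"
proof -
  have "dist (closest_point K (y - c *\<^sub>R v)) (closest_point K z) \<le> dist (y - c *\<^sub>R v) z"
    using closest_point_lipschitz[OF assms(2,1)] assms(3) by blast
  then have "norm (closest_point K (y - c *\<^sub>R v) - z) \<le> norm ((y - z) - c *\<^sub>R v)"
    using closest_point_self[OF assms(3)] by (simp add: dist_norm algebra_simps)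
  then have "(norm (closest_point K (y - c *\<^sub>R v) - z))\<^sup>2 \<le> (norm ((y - z) - c *\<^sub>R v))\<^sup>2"
    by (intro power_mono) auto
  also have "\<dots> = (norm (y - z))\<^sup>2 - 2 * c * (v \<bullet> (y - z)) + c\<^sup>2 * (norm v)\<^sup>2"
    unfolding power2_norm_eq_inner
    by (simp add: inner_diff_left inner_diff_right inner_commute algebra_simps power2_eq_square)
  finally show ?thesis .
qed

lemma ogd_potential_step:
  fixes K :: "'a::euclidean_space set" and h :: "'a \<Rightarrow> real"
  assumes K: "closed K" "convex K" and pos: "0 < \<alpha>" "0 < \<epsilon>" "0 < L"
    and h: "nearly_strongly_convex \<alpha> \<epsilon> K h" "subgradient_at K h x v" "norm v \<le> L"
    and x: "x \<in> K" "xstar \<in> K" and u: "0 \<le> u" and \<gamma>: "0 \<le> \<gamma>" "\<gamma> \<le> 1"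
  shows "\<gamma> * (h x - h xstar)
           + ogd_weight \<alpha> \<epsilon> L (u + \<gamma>)
               * (norm (closest_point K (x - (Rprime \<alpha> \<epsilon> L (u + \<gamma>) * \<gamma>) *\<^sub>R v) - xstar))\<^sup>2
           - ogd_weight \<alpha> \<epsilon> L u * (norm (x - xstar))\<^sup>2
         \<le> ogd_potential \<alpha> \<epsilon> L (u + \<gamma>) - ogd_potential \<alpha> \<epsilon> L u"
proof -
  define \<eta> where "\<eta> = Rprime \<alpha> \<epsilon> L (u + \<gamma>)"
  define \<psi> where "\<psi> = ogd_weight \<alpha> \<epsilon> L (u + \<gamma>)"
  define \<theta> where "\<theta> = 2 * \<eta> * \<psi>"
  define w where "w = v \<bullet> (x - xstar)"
  define r where "r = norm (x - xstar)"
  define M where "M = (max (r - \<epsilon>) 0)\<^sup>2"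
  define D' where "D' = (norm (closest_point K (x - (\<eta> * \<gamma>) *\<^sub>R v) - xstar))\<^sup>2"
  have \<psi>: "0 \<le> \<psi>" using ogd_weight_nonneg[OF pos] u \<gamma> by (simp add: \<psi>_def)
  have \<theta>: "0 \<le> \<theta>" "\<theta> \<le> 1"
    using Rprime_weight_bounds[OF pos, of "u + \<gamma>"] u \<gamma> by (simp_all add: \<theta>_def \<eta>_def \<psi>_def)
  have "\<gamma> * (h x - h xstar) \<le> \<gamma> * (w - \<alpha> / 2 * M)"
    using nearly_strongly_convex_gap[OF h(1) x h(2)] \<gamma> by (intro mult_left_mono) (simp_all add: w_def M_def r_def)
  moreover have "w \<le> L * r"
    using norm_cauchy_schwarz[of v "x - xstar"] mult_right_mono[OF h(3), of r]
    by (simp add: w_def r_def)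
  then have "(1 - \<theta>) * \<gamma> * w \<le> (1 - \<theta>) * \<gamma> * (L * r)"
    using \<theta> \<gamma> by (intro mult_left_mono) auto
  moreover have "\<psi> * D' \<le> \<psi> * r\<^sup>2 - \<theta> * \<gamma> * w + \<theta> * \<eta> * \<gamma>\<^sup>2 * L\<^sup>2 / 2"
  proof -
    have "(\<eta> * \<gamma>)\<^sup>2 * (norm v)\<^sup>2 \<le> (\<eta> * \<gamma>)\<^sup>2 * L\<^sup>2"
      using h(3) by (intro mult_left_mono power_mono) auto
    then have "D' \<le> r\<^sup>2 - 2 * (\<eta> * \<gamma>) * w + (\<eta> * \<gamma>)\<^sup>2 * L\<^sup>2"
      using closest_point_step_dist_sq_le[OF K x(2), of x "\<eta> * \<gamma>" v] by (simp add: D'_def w_def r_def)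
    then have "\<psi> * D' \<le> \<psi> * (r\<^sup>2 - 2 * (\<eta> * \<gamma>) * w + (\<eta> * \<gamma>)\<^sup>2 * L\<^sup>2)"
      using \<psi> by (rule mult_left_mono)
    also have "\<dots> = \<psi> * r\<^sup>2 - \<theta> * \<gamma> * w + \<theta> * \<eta> * \<gamma>\<^sup>2 * L\<^sup>2 / 2"
      by (simp add: \<theta>_def algebra_simps power2_eq_square)
    finally show ?thesis .
  qed
  moreover have "(\<psi> - ogd_weight \<alpha> \<epsilon> L u) * r\<^sup>2 + (1 - \<theta>) * \<gamma> * L * r - \<alpha> * \<gamma> / 2 * M
      + \<theta> * \<eta> * \<gamma>\<^sup>2 * L\<^sup>2 / 2 \<le> ogd_potential \<alpha> \<epsilon> L (u + \<gamma>) - ogd_potential \<alpha> \<epsilon> L u"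
    using ogd_potential_increment[OF pos u _ _ norm_ge_zero, of "u + \<gamma>" "x - xstar"] \<gamma>
    by (simp add: \<theta>_def \<eta>_def \<psi>_def M_def r_def)
  ultimately show ?thesis
    unfolding \<eta>_def[symmetric] \<psi>_def[symmetric] D'_def[symmetric] r_def[symmetric]
    by (simp add: algebra_simps)
qed

lemma projected_iterates_in:
  assumes "closed K" "x 1 \<in> K" "\<And>t. 1 \<le> t \<Longrightarrow> t \<le> T \<Longrightarrow> x (Suc t) = closest_point K (y t)"
  shows "1 \<le> t \<Longrightarrow> t \<le> Suc T \<Longrightarrow> x t \<in> K"
proof (induction t)
  case (Suc t)
  then show ?case
    using assms closest_point_in_set[of K] by (cases "t = 0") auto
qed simp

theorem theorem13:
  fixes K :: "'a::euclidean_space set"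
    and l :: "nat \<Rightarrow> 'a \<Rightarrow> real" and grad :: "nat \<Rightarrow> 'a"
    and g :: "nat \<Rightarrow> real" and x :: "nat \<Rightarrow> 'a"
    and \<alpha> \<epsilon> L :: real and T :: nat and xstar :: 'a
  assumes "closed K" and "convex K"
    and "\<alpha> > 0" and "\<epsilon> > 0" and "L > 0"
    and "\<And>t. 1 \<le> t \<Longrightarrow> t \<le> T \<Longrightarrow> nearly_strongly_convex \<alpha> \<epsilon> K (l t)"
    and "\<And>t. 1 \<le> t \<Longrightarrow> t \<le> T \<Longrightarrow> g t \<in> {0..1}"
    and "x 1 \<in> K"
    and "\<And>t. 1 \<le> t \<Longrightarrow> t \<le> T \<Longrightarrow> subgradient_at K (l t) (x t) (grad t)"
    and "\<And>t. 1 \<le> t \<Longrightarrow> t \<le> T \<Longrightarrow> norm (grad t) \<le> L"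
    and "\<And>t. 1 \<le> t \<Longrightarrow> t \<le> T \<Longrightarrow>
           x (Suc t) = closest_point K
             (x t - (Rprime \<alpha> \<epsilon> L (\<Sum>s=1..t. g s) * g t) *\<^sub>R grad t)"
    and "xstar \<in> K"
  shows "(\<Sum>t=1..T. g t * (l t (x t) - l t xstar))
         \<le> 2 * sqrt 2 * \<epsilon> * L * sqrt (\<Sum>s=1..T. g s)
           + L\<^sup>2 / \<alpha> * (ln ((\<Sum>s=1..T. g s) + 1) + 1)"
proof -
  note pos = assms(3-5)
  define G where "G n = (\<Sum>s=1..n. g s)" for n
  define \<Phi> where "\<Phi> n = ogd_potential \<alpha> \<epsilon> L (G n)
                         - ogd_weight \<alpha> \<epsilon> L (G n) * (norm (x (Suc n) - xstar))\<^sup>2" for n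
  have G_nonneg: "0 \<le> G n" if "n \<le> T" for n
    using assms(7) that by (auto simp: G_def intro!: sum_nonneg)
  have x_in_K: "x t \<in> K" if "1 \<le> t" "t \<le> Suc T" for t
    using projected_iterates_in[OF assms(1,8) assms(11)] that by blast
  have "g t * (l t (x t) - l t xstar) \<le> \<Phi> t - \<Phi> (t - 1)" if t: "1 \<le> t" "t \<le> T" for t
  proof -
    obtain n where n: "t = Suc n" using t by (cases t) auto
    have "G t = G n + g t" by (simp add: G_def n)
    then show ?thesis
      using ogd_potential_step[OF assms(1,2) pos assms(6,9,10)[OF t] x_in_K[OF t(1)] assms(12) G_nonneg[of n]]
        assms(7,11)[OF t] t
      by (simp add: \<Phi>_def G_def n algebra_simps)
  qed
  then have "(\<Sum>t=1..T. g t * (l t (x t) - l t xstar)) \<le> (\<Sum>t=1..T. \<Phi> t - \<Phi> (t - 1))"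
    by (intro sum_mono) auto
  also have "\<dots> = \<Phi> T - \<Phi> 0" using sum_telescope''[of 0 T \<Phi>] by simp
  also have "\<dots> \<le> ogd_potential \<alpha> \<epsilon> L (G T)"
    using ogd_weight_nonneg[OF pos G_nonneg[of T]]
    by (simp add: \<Phi>_def G_def ogd_potential_zero ogd_weight_zero)
  also have "\<dots> \<le> 2 * sqrt 2 * \<epsilon> * L * sqrt (G T) + L\<^sup>2 / \<alpha> * (ln (G T + 1) + 1)"
    using ogd_potential_le[OF pos G_nonneg[of T]] by simp
  finally show ?thesis by (simp add: G_def)
qed

end
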